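(* Let $\alpha$ be a unit-speed curve in $\mathbb{R}^3$ with nonvanishing curvature, let $\alpha_T$ be its tangent indicatrix, and let $\beta$ be an evolute-direction curve of $\alpha_T$ (an $X$-direction curve of $\alpha_T$ with $N_\beta=T_T$). Then: (i) $\alpha_T$ is a circle or a part of a circle on the unit sphere if and only if $\beta$ is a helix; (ii) $\alpha_T$ is a spherical helix if and only if $\beta$ is a slant helix.
   Context: Let $\alpha:I\subset\mathbb{R}\to\mathbb{R}^3$ be a unit-speed curve with curvature $\kappa>0$, torsion $\tau$ and Frenet frame $\{T,N,B\}$. The tangent indicatrix of $\alpha$ is the curve $\alpha_T=T$ on the unit sphere. Its arc length is $s_T=\int\kappa\,ds$. Its Frenet apparatus is $\{T_T,N_T,B_T,\kappa_T,\tau_T\}$, with $\frac{dT_T}{ds_T}=\kappa_TN_T$, $\frac{dN_T}{ds_T}=-\kappa_TT_T+\tau_TB_T$ and $\frac{dB_T}{ds_T}=-\tau_TN_T$. Let $x,y,z$ be real functions of $s_T$ with $x^2+y^2+z^2=1$, and set $X=xT_T+yN_T+zB_T$. An integral curve $\beta$ of $X$, meaning $d\beta/ds_T=X$, is an $X$-direction curve of $\alpha_T$. It is regarded as a unit-speed Frenet curve with frame $\{T_\beta=X,N_\beta,B_\beta\}$, curvature $\kappa_\beta>0$ and torsion $\tau_\beta$. $\beta$ is an evolute-direction curve of $\alpha_T$ if $N_\beta=T_T$. A curve with curvature $k>0$ and torsion $t$ is a (general) helix if its unit tangent makes a constant angle with a fixed line; equivalently, $t/k$ is constant. It is a slant helix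 if its principal normal makes a constant angle with a fixed line; equivalently, $\frac{k^2}{(k^2+t^2)^{3/2}}\,(t/k)'$ is constant, where $'$ is the derivative with respect to arc length. A spherical helix is a helix lying on a sphere. *)

theory Defs
  imports "HOL-Analysis.Analysis"
begin

definition frenet_curve ::
  "real set \<Rightarrow> (real \<Rightarrow> real^3) \<Rightarrow> (real \<Rightarrow> real^3) \<Rightarrow> (real \<Rightarrow> real^3) \<Rightarrow>
   (real \<Rightarrow> real^3) \<Rightarrow> (real \<Rightarrow> real) \<Rightarrow> (real \<Rightarrow> real) \<Rightarrow> bool" where
  "frenet_curve J c T N B k t \<longleftrightarrow>
     (\<forall>s\<in>J.
        (c has_vector_derivative T s) (at s) \<and>
        (T has_vector_derivative (k s *\<^sub>R N s)) (at s) \<and>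
        (N has_vector_derivative (- (k s *\<^sub>R T s) + t s *\<^sub>R B s)) (at s) \<and>
        (B has_vector_derivative (- (t s *\<^sub>R N s))) (at s) \<and>
        norm (T s) = 1 \<and> norm (N s) = 1 \<and> T s \<bullet> N s = 0 \<and>
        B s = cross3 (T s) (N s) \<and>
        k s > 0)"

definition helix :: "real set \<Rightarrow> (real \<Rightarrow> real^3) \<Rightarrow> bool" where
  "helix J T \<longleftrightarrow> (\<exists>u::real^3. norm u = 1 \<and> (\<exists>a. \<forall>s\<in>J. T s \<bullet> u = a))"

definition slant_helix :: "real set \<Rightarrow> (real \<Rightarrow> real^3) \<Rightarrow> bool" where
  "slant_helix J N \<longleftrightarrow> (\<exists>u::real^3. norm u = 1 \<and> (\<exists>a. \<forall>s\<in>J. N s \<bullet> u = a))"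

definition on_sphere :: "real set \<Rightarrow> (real \<Rightarrow> real^3) \<Rightarrow> bool" where
  "on_sphere J c \<longleftrightarrow> (\<exists>m r. r > 0 \<and> (\<forall>s\<in>J. dist (c s) m = r))"

definition spherical_helix :: "real set \<Rightarrow> (real \<Rightarrow> real^3) \<Rightarrow> (real \<Rightarrow> real^3) \<Rightarrow> bool" where
  "spherical_helix J c T \<longleftrightarrow> helix J T \<and> on_sphere J c"

definition on_circle :: "real set \<Rightarrow> (real \<Rightarrow> real^3) \<Rightarrow> bool" where
  "on_circle J c \<longleftrightarrow> (\<exists>m u r. u \<noteq> 0 \<and> r > 0 \<and>
      (\<forall>s\<in>J. (c s - m) \<bullet> u = 0 \<and> dist (c s) m = r))"

end

theory Submission
  imports Defs
begin

text \<open>Along \<open>\<alpha>\<^sub>T\<close> we have \<open>\<alpha>\<^sub>T' = T\<^sub>T\<close>, and since \<open>N\<^sub>\<beta> = T\<^sub>T\<close> also \<open>X' = \<kappa>\<^sub>\<beta> T\<^sub>T\<close> with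
  \<open>\<kappa>\<^sub>\<beta> > 0\<close>. So for a fixed direction \<open>u\<close> the functions \<open>\<alpha>\<^sub>T \<bullet> u\<close> and \<open>X \<bullet> u\<close> are constant
  simultaneously (exactly when \<open>T\<^sub>T \<perp> u\<close>), i.e. \<open>\<beta>\<close> is a helix iff \<open>\<alpha>\<^sub>T\<close> lies in a plane.
  As \<open>\<alpha>\<^sub>T\<close> is a non-constant curve on the unit sphere, lying in a plane means lying on a
  circle. Part (ii) holds because \<open>\<alpha>\<^sub>T\<close> always lies on the unit sphere and \<open>N\<^sub>\<beta> = T\<^sub>T\<close>
  turns the helix condition for \<open>\<alpha>\<^sub>T\<close> into the slant helix condition for \<open>\<beta>\<close>.
  The parameter set \<open>\<sigma> ` I\<close> of \<open>\<alpha>\<^sub>T\<close> need not be open, so constancy is tested after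
  pulling back along \<open>\<sigma>\<close>, whose derivative \<open>\<kappa>\<close> does not vanish on the open interval \<open>I\<close>.\<close>

lemma frenet_curveD:
  assumes "frenet_curve J c T N B k t" "s \<in> J"
  shows "(c has_vector_derivative T s) (at s)" "(T has_vector_derivative k s *\<^sub>R N s) (at s)"
    "norm (T s) = 1" "k s > 0"
  using assms unfolding frenet_curve_def by blast+

lemma constant_on_image_iff_deriv_zero:
  fixes g g' \<sigma> \<kappa> :: "real \<Rightarrow> real"
  assumes I: "open I" "convex I"
    and \<sigma>: "\<And>s. s \<in> I \<Longrightarrow> (\<sigma> has_real_derivative \<kappa> s) (at s)"
    and \<kappa>: "\<And>s. s \<in> I \<Longrightarrow> \<kappa> s \<noteq> 0"
    and g: "\<And>t. t \<in> \<sigma> ` I \<Longrightarrow> (g has_real_derivative g' t) (at t)"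
  shows "(\<exists>c. \<forall>t\<in>\<sigma> ` I. g t = c) \<longleftrightarrow> (\<forall>t\<in>\<sigma> ` I. g' t = 0)"
proof -
  have chain: "(g \<circ> \<sigma> has_real_derivative g' (\<sigma> s) * \<kappa> s) (at s)" if "s \<in> I" for s
    using DERIV_chain[OF g[OF imageI[OF that]] \<sigma>[OF that]] .
  show ?thesis
  proof
    assume "\<exists>c. \<forall>t\<in>\<sigma> ` I. g t = c"
    then obtain c where c: "\<And>s. s \<in> I \<Longrightarrow> (g \<circ> \<sigma>) s = c" by auto
    show "\<forall>t\<in>\<sigma> ` I. g' t = 0"
    proof
      fix t assume "t \<in> \<sigma> ` I"
      then obtain s where s: "s \<in> I" and t: "t = \<sigma> s" by blast
      have "((\<lambda>_. c) has_real_derivative g' (\<sigma> s) * \<kappa> s) (at s)"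
        by (rule has_field_derivative_transform_within_open[OF chain[OF s] I(1) s c])
      then have "g' (\<sigma> s) * \<kappa> s = 0"
        using DERIV_const by (rule DERIV_unique)
      then show "g' t = 0" using \<kappa>[OF s] t by simp
    qed
  next
    assume "\<forall>t\<in>\<sigma> ` I. g' t = 0"
    then have "(g \<circ> \<sigma> has_real_derivative 0) (at s within I)" if "s \<in> I" for s
      using chain[OF that] that by (auto intro: has_field_derivative_at_within)
    then obtain c where "\<forall>s\<in>I. (g \<circ> \<sigma>) s = c"
      using has_field_derivative_zero_constant[OF I(2)] by blast
    then show "\<exists>c. \<forall>t\<in>\<sigma> ` I. g t = c" by auto
  qed
qed

lemma inner_constant_on_image_iff_orthogonal:
  fixes f f' :: "real \<Rightarrow> 'a::real_inner" and \<sigma> \<kappa> :: "real \<Rightarrow> real"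
  assumes "open I" "convex I"
    and "\<And>s. s \<in> I \<Longrightarrow> (\<sigma> has_real_derivative \<kappa> s) (at s)"
    and "\<And>s. s \<in> I \<Longrightarrow> \<kappa> s \<noteq> 0"
    and f: "\<And>t. t \<in> \<sigma> ` I \<Longrightarrow> (f has_vector_derivative f' t) (at t)"
  shows "(\<exists>c. \<forall>t\<in>\<sigma> ` I. f t \<bullet> u = c) \<longleftrightarrow> (\<forall>t\<in>\<sigma> ` I. f' t \<bullet> u = 0)"
proof (rule constant_on_image_iff_deriv_zero[OF assms(1-4)])
  fix t assume "t \<in> \<sigma> ` I"
  then show "((\<lambda>t. f t \<bullet> u) has_real_derivative f' t \<bullet> u) (at t)"
    using bounded_linear.has_vector_derivative[OF bounded_linear_inner_left f]
    by (simp add: has_real_derivative_iff_has_vector_derivative)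
qed

lemma inner_constant_on_image_iff_of_parallel_derivatives:
  fixes f g f' :: "real \<Rightarrow> 'a::real_inner" and \<sigma> \<kappa> \<mu> :: "real \<Rightarrow> real"
  assumes "open I" "convex I"
    and "\<And>s. s \<in> I \<Longrightarrow> (\<sigma> has_real_derivative \<kappa> s) (at s)"
    and "\<And>s. s \<in> I \<Longrightarrow> \<kappa> s \<noteq> 0"
    and f: "\<And>t. t \<in> \<sigma> ` I \<Longrightarrow> (f has_vector_derivative f' t) (at t)"
    and g: "\<And>t. t \<in> \<sigma> ` I \<Longrightarrow> (g has_vector_derivative \<mu> t *\<^sub>R f' t) (at t)"
    and \<mu>: "\<And>t. t \<in> \<sigma> ` I \<Longrightarrow> \<mu> t \<noteq> 0"
  shows "(\<exists>a. \<forall>t\<in>\<sigma> ` I. f t \<bullet> u = a) \<longleftrightarrow> (\<exists>a. \<forall>t\<in>\<sigma> ` I. g t \<bullet> u = a)"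
proof -
  have "(\<forall>t\<in>\<sigma> ` I. (\<mu> t *\<^sub>R f' t) \<bullet> u = 0) \<longleftrightarrow> (\<forall>t\<in>\<sigma> ` I. f' t \<bullet> u = 0)"
    using \<mu> by simp
  then show ?thesis
    using inner_constant_on_image_iff_orthogonal[OF assms(1-4) f, of u]
      inner_constant_on_image_iff_orthogonal[OF assms(1-4) g, of u] by (simp only:)
qed

lemma frenet_curve_on_image_nonconstant:
  assumes "open I" "convex I" "I \<noteq> {}"
    and "\<And>s. s \<in> I \<Longrightarrow> (\<sigma> has_real_derivative \<kappa> s) (at s)"
    and "\<And>s. s \<in> I \<Longrightarrow> \<kappa> s \<noteq> 0"
    and c: "frenet_curve (\<sigma> ` I) c T N B k t"
  shows "\<exists>t\<in>\<sigma> ` I. c t \<noteq> v"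
proof (rule ccontr)
  assume "\<not> (\<exists>t\<in>\<sigma> ` I. c t \<noteq> v)"
  then have c_constant: "\<exists>a. \<forall>t\<in>\<sigma> ` I. c t \<bullet> u = a" for u by auto
  obtain t0 where t0: "t0 \<in> \<sigma> ` I" using \<open>I \<noteq> {}\<close> by blast
  have "T t0 \<bullet> T t0 = 0"
    using inner_constant_on_image_iff_orthogonal[OF assms(1,2,4,5) frenet_curveD(1)[OF c], of "T t0"]
      c_constant t0 by blast
  then show False using frenet_curveD(3)[OF c t0] by simp
qed

lemma unit_sphere_curve_on_circle_iff_planar:
  fixes c :: "real \<Rightarrow> real^3"
  assumes sphere: "\<And>t. t \<in> J \<Longrightarrow> norm (c t) = 1"
    and nonconstant: "\<And>v. \<exists>t\<in>J. c t \<noteq> v"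
  shows "on_circle J c \<longleftrightarrow> (\<exists>u. norm u = 1 \<and> (\<exists>a. \<forall>t\<in>J. c t \<bullet> u = a))"
proof
  assume "on_circle J c"
  then obtain m u where u: "u \<noteq> 0" and plane: "\<forall>t\<in>J. (c t - m) \<bullet> u = 0"
    unfolding on_circle_def by blast
  have "\<forall>t\<in>J. c t \<bullet> (u /\<^sub>R norm u) = (m \<bullet> u) / norm u"
    using plane by (simp add: inner_diff_left divide_inverse)
  then show "\<exists>u. norm u = 1 \<and> (\<exists>a. \<forall>t\<in>J. c t \<bullet> u = a)"
    using u by (intro exI[of _ "u /\<^sub>R norm u"]) auto
next
  assume "\<exists>u. norm u = 1 \<and> (\<exists>a. \<forall>t\<in>J. c t \<bullet> u = a)"
  then obtain u a where u: "norm u = 1" and a: "\<And>t. t \<in> J \<Longrightarrow> c t \<bullet> u = a" by blast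
  have dist_center: "(dist (c t) (a *\<^sub>R u))\<^sup>2 = 1 - a\<^sup>2" if "t \<in> J" for t
  proof -
    have "(dist (c t) (a *\<^sub>R u))\<^sup>2 = c t \<bullet> c t - 2 * a * (c t \<bullet> u) + a\<^sup>2 * (u \<bullet> u)"
      unfolding dist_norm power2_norm_eq_inner
      by (simp add: inner_commute algebra_simps power2_eq_square)
    then show ?thesis using sphere[OF that] a[OF that] u by (simp add: norm_eq_1 power2_eq_square)
  qed
  obtain t0 where "t0 \<in> J" "c t0 \<noteq> a *\<^sub>R u" using nonconstant by blast
  then have radius_pos: "0 < 1 - a\<^sup>2"
    using dist_center[of t0] by (metis dist_nz zero_less_power zero_less_power2)
  show "on_circle J c"
    unfolding on_circle_def
  proof (rule exI[of _ "a *\<^sub>R u"], rule exI[of _ u], rule exI[of _ "sqrt (1 - a\<^sup>2)"],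
      intro conjI ballI)
    show "u \<noteq> 0" using u by auto
    show "0 < sqrt (1 - a\<^sup>2)" using radius_pos by simp
    fix t assume t: "t \<in> J"
    show "(c t - a *\<^sub>R u) \<bullet> u = 0" using a[OF t] u by (simp add: inner_diff_left norm_eq_1)
    show "dist (c t) (a *\<^sub>R u) = sqrt (1 - a\<^sup>2)"
      by (metis dist_center[OF t] real_sqrt_unique zero_le_dist)
  qed
qed

theorem theorem4p5:
  fixes I :: "real set"
    and \<alpha> T N B :: "real \<Rightarrow> real^3" and \<kappa> \<tau> :: "real \<Rightarrow> real"
    and \<sigma> :: "real \<Rightarrow> real"
    and \<alpha>T TT NT BT :: "real \<Rightarrow> real^3" and \<kappa>T \<tau>T :: "real \<Rightarrow> real"
    and x y z :: "real \<Rightarrow> real"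
    and \<beta> N\<beta> B\<beta> :: "real \<Rightarrow> real^3" and \<kappa>\<beta> \<tau>\<beta> :: "real \<Rightarrow> real"
  assumes I: "open I" "is_interval I" "I \<noteq> {}"
    and \<alpha>: "frenet_curve I \<alpha> T N B \<kappa> \<tau>"
    and arclen: "\<forall>s\<in>I. (\<sigma> has_real_derivative \<kappa> s) (at s)"
    and indicatrix: "\<forall>s\<in>I. \<alpha>T (\<sigma> s) = T s"
    and \<alpha>T: "frenet_curve (\<sigma> ` I) \<alpha>T TT NT BT \<kappa>T \<tau>T"
    and xyz: "\<forall>t\<in>\<sigma> ` I. (x t)\<^sup>2 + (y t)\<^sup>2 + (z t)\<^sup>2 = 1"
    and \<beta>: "frenet_curve (\<sigma> ` I) \<beta> (\<lambda>t. x t *\<^sub>R TT t + y t *\<^sub>R NT t + z t *\<^sub>R BT t)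
              N\<beta> B\<beta> \<kappa>\<beta> \<tau>\<beta>"
    and evolute: "\<forall>t\<in>\<sigma> ` I. N\<beta> t = TT t"
  shows "(on_circle (\<sigma> ` I) \<alpha>T \<longleftrightarrow>
            helix (\<sigma> ` I) (\<lambda>t. x t *\<^sub>R TT t + y t *\<^sub>R NT t + z t *\<^sub>R BT t))
       \<and> (spherical_helix (\<sigma> ` I) \<alpha>T TT \<longleftrightarrow> slant_helix (\<sigma> ` I) N\<beta>)"
proof -
  define X where "X = (\<lambda>t. x t *\<^sub>R TT t + y t *\<^sub>R NT t + z t *\<^sub>R BT t)"
  have I_convex: "convex I" using I(2) by (rule is_interval_convex)
  have \<sigma>': "\<And>s. s \<in> I \<Longrightarrow> (\<sigma> has_real_derivative \<kappa> s) (at s)" using arclen by blast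
  have \<kappa>_nonzero: "\<And>s. s \<in> I \<Longrightarrow> \<kappa> s \<noteq> 0" using frenet_curveD(4)[OF \<alpha>] by fastforce
  have \<kappa>\<beta>_nonzero: "\<And>t. t \<in> \<sigma> ` I \<Longrightarrow> \<kappa>\<beta> t \<noteq> 0" using frenet_curveD(4)[OF \<beta>] by fastforce
  have X': "(X has_vector_derivative \<kappa>\<beta> t *\<^sub>R TT t) (at t)" if "t \<in> \<sigma> ` I" for t
    using frenet_curveD(2)[OF \<beta> that] evolute that unfolding X_def by simp
  note planar_iff_helix = inner_constant_on_image_iff_of_parallel_derivatives
    [OF I(1) I_convex \<sigma>' \<kappa>_nonzero frenet_curveD(1)[OF \<alpha>T] X' \<kappa>\<beta>_nonzero]
  have unit_sphere: "norm (\<alpha>T t) = 1" if "t \<in> \<sigma> ` I" for t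
    using that indicatrix frenet_curveD(3)[OF \<alpha>] by auto
  note nonconstant = frenet_curve_on_image_nonconstant[OF I(1) I_convex I(3) \<sigma>' \<kappa>_nonzero \<alpha>T]
  have "on_circle (\<sigma> ` I) \<alpha>T \<longleftrightarrow> helix (\<sigma> ` I) X"
    unfolding helix_def
    by (simp only: unit_sphere_curve_on_circle_iff_planar[OF unit_sphere nonconstant] planar_iff_helix)
  moreover have "on_sphere (\<sigma> ` I) \<alpha>T"
    unfolding on_sphere_def using unit_sphere by (intro exI[of _ 0] exI[of _ 1]) auto
  moreover have "helix (\<sigma> ` I) TT \<longleftrightarrow> slant_helix (\<sigma> ` I) N\<beta>"
    unfolding helix_def slant_helix_def using evolute by auto
  ultimately show ?thesis
    unfolding spherical_helix_def X_def by blast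
qed

end
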